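(* Let $n=p_1p_2\cdots p_r$, where $r\geq 3$ and $p_1<p_2<\cdots<p_r$ are primes, and let $3\leq s\leq r$. If $\deg(p_{s-1}p_s\cdots p_r)\geq\deg(p_sp_{s+1}\cdots p_r)$ in $\mathcal{P}(C_n)$, then $\deg(p_{s-2}p_{s-1}\cdots p_r)>\deg(p_{s-1}p_s\cdots p_r)$.
   Context: For a finite group $G$, the power graph $\mathcal{P}(G)$ is the simple undirected graph with vertex set $G$ in which two distinct vertices are adjacent if one is an integral power of the other. $C_n$ denotes the cyclic group of order $n$, identified with $\mathbb{Z}_n=\{0,1,\ldots,n-1\}$, so a positive divisor $d$ of $n$ is regarded as the element $d \bmod n\in\mathbb{Z}_n$ (in particular $n$ itself is the element $0$). $\deg(a)$ is the degree of vertex $a$ in $\mathcal{P}(C_n)$. *)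

theory Defs
  imports "HOL-Computational_Algebra.Primes"
begin

text \<open>The cyclic group C_n is identified with Z_n = {0,...,n-1} (additive).
  An integral power of a is k*a mod n for an integer k.\<close>

definition is_power_Zn :: "nat \<Rightarrow> nat \<Rightarrow> nat \<Rightarrow> bool" where
  "is_power_Zn n b a \<longleftrightarrow> (\<exists>k::int. int b = (k * int a) mod int n)"

definition pg_adj :: "nat \<Rightarrow> nat \<Rightarrow> nat \<Rightarrow> bool" where
  "pg_adj n a b \<longleftrightarrow> a \<in> {0..<n} \<and> b \<in> {0..<n} \<and> a \<noteq> b \<and>
     (is_power_Zn n b a \<or> is_power_Zn n a b)"

definition pg_deg :: "nat \<Rightarrow> nat \<Rightarrow> nat" where
  "pg_deg n a = card {b \<in> {0..<n}. pg_adj n a b}"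

end

theory Submission
  imports Defs "HOL-Number_Theory.Totient"
begin

text \<open>If \<open>n = d m\<close> with \<open>gcd d m = 1\<close>, the neighbours of \<open>d\<close> in the power graph of \<open>C\<^sub>n\<close> are the
  \<open>m\<close> elements of \<open>\<langle>d\<rangle>\<close> and the \<open>d \<phi>(m)\<close> generators of subgroups containing \<open>d\<close>, which
  overlap in the \<open>\<phi>(m)\<close> generators of \<open>\<langle>d\<rangle>\<close>; hence \<open>deg d = m + (d - 1) \<phi>(m) - 1\<close>.
  With \<open>a = p\<^sub>1\<cdots>p\<^sub>s\<^sub>-\<^sub>3\<close>, \<open>f = \<phi>(a)\<close>, \<open>q = p\<^sub>s\<^sub>-\<^sub>2\<close>, \<open>t = p\<^sub>s\<^sub>-\<^sub>1\<close> and
  \<open>N = p\<^sub>s\<cdots>p\<^sub>r\<close> the three degrees are explicit polynomials in these quantities. The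
  hypothesis becomes \<open>a q (t - 1) \<le> f (q - 1) (N + t - 2)\<close> and the conclusion
  \<open>a (q - 1) < f (t N + q - 2)\<close>; the former implies the latter because
  \<open>(q - 1)\<^sup>2 (N + t - 2) < q (t - 1) (t N + q - 2)\<close> whenever \<open>t > q \<ge> 2\<close>.\<close>

lemma is_power_Zn_iff_gcd_dvd:
  assumes "a < n"
  shows "is_power_Zn n a b \<longleftrightarrow> gcd b n dvd a"
proof
  assume "is_power_Zn n a b"
  then obtain k where k: "int a = (k * int b) mod int n"
    unfolding is_power_Zn_def by blast
  have "gcd (int b) (int n) dvd (k * int b) mod int n"
    by (simp add: dvd_mod)
  then show "gcd b n dvd a"
    using k by (metis gcd_int_int_eq int_dvd_int_iff)
next
  assume "gcd b n dvd a"
  then obtain e where e: "a = gcd b n * e" by blast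
  obtain u v where uv: "u * int b + v * int n = gcd (int b) (int n)"
    using bezout_int by blast
  have "int a = int e * gcd (int b) (int n)" using e by (simp add: gcd_int_int_eq)
  also have "\<dots> = (int e * u) * int b + (int e * v) * int n"
    using uv by (metis distrib_left mult.assoc)
  finally have "int a = ((int e * u) * int b) mod int n"
    using assms by (metis mod_mult_self1 of_nat_less_iff mod_pos_pos_trivial of_nat_0_le_iff)
  then show "is_power_Zn n a b"
    unfolding is_power_Zn_def by blast
qed

lemma pg_adj_divisor_iff:
  assumes "d dvd n" "d < n" "b < n"
  shows "pg_adj n d b \<longleftrightarrow> b \<noteq> d \<and> (d dvd b \<or> gcd b n dvd d)"
proof -
  have "gcd d n = d" using assms(1) by (simp add: gcd_nat.absorb1)
  then show ?thesis
    using assms is_power_Zn_iff_gcd_dvd[of b n d] is_power_Zn_iff_gcd_dvd[of d n b]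
    unfolding pg_adj_def by auto
qed

lemma gcd_dvd_iff_coprime:
  fixes b d m :: nat
  assumes "coprime d m"
  shows "gcd b (d * m) dvd d \<longleftrightarrow> coprime b m"
proof
  assume "gcd b (d * m) dvd d"
  then have "gcd b m dvd d"
    by (meson dvd_trans gcd_dvd1 gcd_dvd2 gcd_greatest dvd_triv_right)
  then have "gcd b m dvd gcd d m" by simp
  then show "coprime b m"
    using assms by (metis coprime_iff_gcd_eq_1 nat_dvd_1_iff_1)
next
  assume "coprime b m"
  then show "gcd b (d * m) dvd d"
    by (metis coprime_commute gcd.commute gcd_mult_left_right_cancel gcd_dvd2)
qed

lemma card_coprime_below: "card {j. j < m \<and> coprime j m} = totient m"
proof (cases "m > 1")
  case True
  have "j > 0" if "coprime j m" for j
    using that True by (cases "j = 0") auto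
  then have "{j. j < m \<and> coprime j m} = totatives m"
    using True totatives_less[of _ m] by (auto simp: in_totatives_iff)
  then show ?thesis by (simp add: totient_def)
next
  case False
  then have "m = 0 \<or> m = 1" by auto
  then show ?thesis by auto
qed

lemma card_coprime_below_multiple:
  "card {b. b < d * m \<and> coprime b m} = d * totient m"
proof (induction d)
  case 0
  then show ?case by simp
next
  case (Suc d)
  have coprime_shift: "coprime (d * m + j) m \<longleftrightarrow> coprime j m" for j
    by (metis coprime_iff_gcd_eq_1 gcd.commute gcd_add_mult mult.commute)
  have "{b. b < Suc d * m \<and> coprime b m} =
      {b. b < d * m \<and> coprime b m} \<union> (\<lambda>j. d * m + j) ` {j. j < m \<and> coprime j m}"
  proof (intro set_eqI iffI)
    fix b assume b: "b \<in> {b. b < Suc d * m \<and> coprime b m}"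
    show "b \<in> {b. b < d * m \<and> coprime b m} \<union> (\<lambda>j. d * m + j) ` {j. j < m \<and> coprime j m}"
    proof (cases "b < d * m")
      case False
      then have "b = d * m + (b - d * m)" "b - d * m < m" using b by auto
      then show ?thesis using b coprime_shift[of "b - d * m"] by (auto simp: image_iff)
    qed (use b in simp)
  qed (auto simp: coprime_shift)
  moreover have "card ((\<lambda>j. d * m + j) ` {j. j < m \<and> coprime j m}) = totient m"
    by (simp add: card_image card_coprime_below)
  moreover have "card ({b. b < d * m \<and> coprime b m} \<union> (\<lambda>j. d * m + j) ` {j. j < m \<and> coprime j m})
      = card {b. b < d * m \<and> coprime b m} + card ((\<lambda>j. d * m + j) ` {j. j < m \<and> coprime j m})"
    by (intro card_Un_disjoint) auto
  ultimately show ?case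
    using Suc by simp
qed

lemma pg_deg_divisor:
  fixes d m n :: nat
  assumes n: "n = d * m" and "coprime d m" and "d > 0" and "m > 0"
  shows "pg_deg n (d mod n) + 1 = m + (d - 1) * totient m"
proof (cases "m = 1")
  case True
  then have "{b \<in> {0..<n}. pg_adj n (d mod n) b} = {1..<n}"
    using n \<open>d > 0\<close> by (auto simp: pg_adj_def is_power_Zn_def intro: exI[of _ 0])
  then show ?thesis
    using True n \<open>d > 0\<close> unfolding pg_deg_def by simp
next
  case False
  then have "d < n" using n \<open>d > 0\<close> \<open>m > 0\<close> by simp
  define Mult where "Mult = {b. b < n \<and> d dvd b}"
  define Gen where "Gen = {b. b < n \<and> coprime b m}"
  have neighbours: "{b \<in> {0..<n}. pg_adj n (d mod n) b} = (Mult \<union> Gen) - {d}"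
    using pg_adj_divisor_iff[of d n] gcd_dvd_iff_coprime[OF \<open>coprime d m\<close>] \<open>d < n\<close> n
    unfolding Mult_def Gen_def by auto
  have "Mult = (\<lambda>j. d * j) ` {..<m}"
    unfolding Mult_def n using \<open>d > 0\<close> by (auto simp: image_iff)
  then have card_Mult: "card Mult = m"
    using \<open>d > 0\<close> by (simp add: card_image inj_on_def)
  have card_Gen: "card Gen = d * totient m"
    unfolding Gen_def n by (rule card_coprime_below_multiple)
  have "Mult \<inter> Gen = (\<lambda>j. d * j) ` {j. j < m \<and> coprime j m}"
    unfolding Mult_def Gen_def n using \<open>d > 0\<close> \<open>coprime d m\<close> by (auto simp: image_iff)
  then have card_Int: "card (Mult \<inter> Gen) = totient m"
    using \<open>d > 0\<close> by (simp add: card_image inj_on_def card_coprime_below)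
  have "finite Mult" "finite Gen" unfolding Mult_def Gen_def by auto
  then have "card (Mult \<union> Gen) + totient m = m + d * totient m"
    using card_Un_Int[of Mult Gen] card_Mult card_Gen card_Int by simp
  moreover have "card ((Mult \<union> Gen) - {d}) + 1 = card (Mult \<union> Gen)"
    using \<open>finite Mult\<close> \<open>finite Gen\<close> \<open>d < n\<close> card_Suc_Diff1[of "Mult \<union> Gen" d]
    by (simp add: Mult_def)
  moreover have "(d - 1) * totient m + totient m = d * totient m"
    using \<open>d > 0\<close> by (simp add: diff_mult_distrib)
  ultimately show ?thesis
    unfolding pg_deg_def neighbours by linarith
qed

lemma coprime_prod_disjoint:
  fixes p :: "nat \<Rightarrow> nat"
  assumes "\<forall>i\<in>A \<union> B. prime (p i)" "inj_on p (A \<union> B)" "A \<inter> B = {}"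
  shows "coprime (prod p A) (prod p B)"
proof (intro prod_coprime_left prod_coprime_right)
  fix i j assume "i \<in> A" "j \<in> B"
  with assms have "p i \<noteq> p j" "prime (p i)" "prime (p j)"
    by (auto dest: inj_onD)
  then show "coprime (p i) (p j)" by (simp add: primes_coprime)
qed

lemma pg_deg_suffix_product:
  fixes p :: "nat \<Rightarrow> nat"
  assumes primes: "\<forall>i\<in>{1..r}. prime (p i)" and inj: "inj_on p {1..r}"
    and n: "n = (\<Prod>i=1..r. p i)" and k: "1 \<le> k" "k \<le> r"
  shows "pg_deg n ((\<Prod>i=k..r. p i) mod n) + 1
    = (\<Prod>i=1..<k. p i) + ((\<Prod>i=k..r. p i) - 1) * totient (\<Prod>i=1..<k. p i)"
proof (rule pg_deg_divisor)
  have "{1..r} = {1..<k} \<union> {k..r}" using k by auto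
  then show "n = (\<Prod>i=k..r. p i) * (\<Prod>i=1..<k. p i)"
    unfolding n by (simp add: prod.union_disjoint ivl_disj_int mult.commute)
  show "coprime (\<Prod>i=k..r. p i) (\<Prod>i=1..<k. p i)"
  proof (rule coprime_prod_disjoint)
    show "inj_on p ({k..r} \<union> {1..<k})"
      by (rule inj_on_subset[OF inj]) (use k in auto)
  qed (use primes k in auto)
  show "(\<Prod>i=k..r. p i) > 0" "(\<Prod>i=1..<k. p i) > 0"
    using primes k by (auto intro!: prod_pos simp: prime_gt_0_nat)
qed

lemma totient_prefix_product_Suc:
  fixes p :: "nat \<Rightarrow> nat"
  assumes primes: "\<forall>i\<in>{1..r}. prime (p i)" and inj: "inj_on p {1..r}"
    and k: "1 \<le> k" "k \<le> r"
  shows "totient (\<Prod>i=1..<Suc k. p i) = totient (\<Prod>i=1..<k. p i) * (p k - 1)"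
proof -
  have "inj_on p ({1..<k} \<union> {k})"
    by (rule inj_on_subset[OF inj]) (use k in auto)
  then have "coprime (prod p {1..<k}) (prod p {k})"
    using primes k by (intro coprime_prod_disjoint) auto
  then show ?thesis
    using k primes by (simp add: prod.atLeastLessThan_Suc totient_mult_coprime totient_prime)
qed

lemma pg_deg_consecutive_suffix_products:
  fixes p :: "nat \<Rightarrow> nat"
  assumes primes: "\<forall>i\<in>{1..r}. prime (p i)" and inj: "inj_on p {1..r}"
    and n: "n = (\<Prod>i=1..r. p i)" and k: "1 \<le> k" "Suc (Suc k) \<le> r"
  defines "a \<equiv> int (\<Prod>i=1..<k. p i)" and "f \<equiv> int (totient (\<Prod>i=1..<k. p i))"
    and "q \<equiv> int (p k)" and "t \<equiv> int (p (Suc k))" and "N \<equiv> int (\<Prod>i=Suc (Suc k)..r. p i)"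
  shows "int (pg_deg n ((\<Prod>i=Suc (Suc k)..r. p i) mod n)) + 1 = a*q*t + (N-1)*f*(q-1)*(t-1)"
    and "int (pg_deg n ((\<Prod>i=Suc k..r. p i) mod n)) + 1 = a*q + (t*N-1)*f*(q-1)"
    and "int (pg_deg n ((\<Prod>i=k..r. p i) mod n)) + 1 = a + (q*t*N-1)*f"
proof -
  have deg: "int (pg_deg n ((\<Prod>i=j..r. p i) mod n)) + 1 = int (\<Prod>i=1..<j. p i)
      + (int (\<Prod>i=j..r. p i) - 1) * int (totient (\<Prod>i=1..<j. p i))"
    if "1 \<le> j" "j \<le> r" for j
  proof -
    have "(\<Prod>i=j..r. p i) > 0"
      using primes that by (intro prod_pos) (auto simp: prime_gt_0_nat)
    then show ?thesis
      using arg_cong[OF pg_deg_suffix_product[OF primes inj n that], of int]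
      by (simp add: of_nat_diff Suc_leI)
  qed
  have "totient (\<Prod>i=1..<Suc k. p i) = totient (\<Prod>i=1..<k. p i) * (p k - 1)"
    and "totient (\<Prod>i=1..<Suc (Suc k). p i) = totient (\<Prod>i=1..<Suc k. p i) * (p (Suc k) - 1)"
    using k by (intro totient_prefix_product_Suc[OF primes inj]; simp)+
  moreover have "p k > 0" "p (Suc k) > 0" using primes k by (auto simp: prime_gt_0_nat)
  ultimately have totient_prefix: "int (totient (\<Prod>i=1..<Suc k. p i)) = f * (q - 1)"
    "int (totient (\<Prod>i=1..<Suc (Suc k). p i)) = f * (q - 1) * (t - 1)"
    by (simp_all add: f_def q_def t_def of_nat_diff Suc_leI del: prod.op_ivl_Suc)
  have "int (\<Prod>i=1..<Suc k. p i) = a * q" "int (\<Prod>i=1..<Suc (Suc k). p i) = a * q * t"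
    "int (\<Prod>i=Suc k..r. p i) = t * N" "int (\<Prod>i=k..r. p i) = q * t * N"
    using k by (simp_all add: a_def q_def t_def N_def prod.atLeastLessThan_Suc prod.atLeast_Suc_atMost)
  then show "int (pg_deg n ((\<Prod>i=Suc (Suc k)..r. p i) mod n)) + 1 = a*q*t + (N-1)*f*(q-1)*(t-1)"
    and "int (pg_deg n ((\<Prod>i=Suc k..r. p i) mod n)) + 1 = a*q + (t*N-1)*f*(q-1)"
    and "int (pg_deg n ((\<Prod>i=k..r. p i) mod n)) + 1 = a + (q*t*N-1)*f"
    using deg[of "Suc (Suc k)"] deg[of "Suc k"] deg[of k] k totient_prefix
    by (simp_all add: a_def f_def N_def)
qed

lemma suffix_degree_inequality:
  fixes a f q t N :: int
  assumes f: "f \<ge> 1" and q: "q \<ge> 2" and t: "t \<ge> q + 1" and N: "N \<ge> 1" and a: "a \<ge> 1"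
    and H: "a*q + (t*N - 1)*f*(q-1) \<ge> a*q*t + (N-1)*f*(q-1)*(t-1)"
  shows "a + (q*t*N - 1)*f > a*q + (t*N - 1)*f*(q-1)"
proof -
  have H': "a*q*(t-1) \<le> f*(q-1)*(N+t-2)" using H by (simp add: algebra_simps)
  have "t*(t-1) \<ge> t" using t q by simp
  then have "t*(t-1) \<ge> q" using t by linarith
  then have "q*(t*(t-1)) \<ge> q*q" using t q by (intro mult_left_mono) auto
  moreover have "q*q \<ge> (q-1)^2" using q by (simp add: power2_eq_square algebra_simps)
  ultimately have C: "q*t*(t-1) \<ge> (q-1)^2" by (simp add: mult.assoc)
  have "(q-1)^2*(N+t-2) < q*(t-1)*(t*N+q-2)"
  proof -
    have "q*(t-1)*(t*N+q-2) - (q-1)^2*(N+t-2)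
        = (N-1)*(q*t*(t-1) - (q-1)^2) + (t-1)*(q*t-1)"
      by (simp add: algebra_simps power2_eq_square)
    moreover have "(N-1)*(q*t*(t-1) - (q-1)^2) \<ge> 0" using N C by simp
    moreover have "q*t \<ge> 2*1" using q t by (intro mult_mono) auto
    then have "(t-1)*(q*t-1) > 0" using q t by simp
    ultimately show ?thesis by linarith
  qed
  have "(q*(t-1)) * (a*(q-1)) = (q-1)*(a*q*(t-1))" by (simp add: algebra_simps)
  also have "\<dots> \<le> (q-1)*(f*(q-1)*(N+t-2))" using H' q by (intro mult_left_mono) auto
  also have "\<dots> = f*((q-1)^2*(N+t-2))" by (simp add: algebra_simps power2_eq_square)
  also have "\<dots> < f*(q*(t-1)*(t*N+q-2))"
    using \<open>(q-1)^2*(N+t-2) < _\<close> f by (intro mult_strict_left_mono) auto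
  also have "\<dots> = (q*(t-1)) * (f*(t*N+q-2))" by (simp add: algebra_simps)
  finally have "a*(q-1) < f*(t*N+q-2)"
    using q t by (simp add: mult_less_cancel_left)
  then show ?thesis by (simp add: algebra_simps)
qed

theorem lemma3p3:
  fixes p :: "nat \<Rightarrow> nat" and r s n :: nat
  assumes "r \<ge> 3"
    and "\<forall>i\<in>{1..r}. prime (p i)"
    and "\<forall>i\<in>{1..r}. \<forall>j\<in>{1..r}. i < j \<longrightarrow> p i < p j"
    and "n = (\<Prod>i=1..r. p i)"
    and "3 \<le> s" and "s \<le> r"
    and "pg_deg n ((\<Prod>i=s-1..r. p i) mod n) \<ge> pg_deg n ((\<Prod>i=s..r. p i) mod n)"
  shows "pg_deg n ((\<Prod>i=s-2..r. p i) mod n) > pg_deg n ((\<Prod>i=s-1..r. p i) mod n)"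
proof -
  define k where "k = s - 2"
  have s: "s = Suc (Suc k)" and k: "1 \<le> k" "Suc (Suc k) \<le> r"
    using \<open>3 \<le> s\<close> \<open>s \<le> r\<close> unfolding k_def by auto
  note primes = assms(2)
  have inj: "inj_on p {1..r}"
    using assms(3) by (metis inj_onI linorder_neqE_nat less_irrefl)
  note deg = pg_deg_consecutive_suffix_products[OF primes inj assms(4) k]
  have "(\<Prod>i=1..<k. p i) > 0" "(\<Prod>i=Suc (Suc k)..r. p i) > 0"
    using primes k by (auto intro!: prod_pos simp: prime_gt_0_nat)
  then have a: "int (\<Prod>i=1..<k. p i) \<ge> 1" and f: "int (totient (\<Prod>i=1..<k. p i)) \<ge> 1"
    and N: "int (\<Prod>i=Suc (Suc k)..r. p i) \<ge> 1"
    by (metis of_nat_1 of_nat_le_iff Suc_le_eq One_nat_def totient_gt_0_iff)+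
  have q: "int (p k) \<ge> 2" using primes k by (simp add: prime_ge_2_nat)
  have "p k < p (Suc k)" using assms(3) k by simp
  then have t: "int (p (Suc k)) \<ge> int (p k) + 1" by simp
  have "int (pg_deg n ((\<Prod>i=Suc (Suc k)..r. p i) mod n)) + 1
      \<le> int (pg_deg n ((\<Prod>i=Suc k..r. p i) mod n)) + 1"
    using assms(7) s by simp
  from suffix_degree_inequality[OF f q t N a this[unfolded deg], folded deg]
  show ?thesis using s by simp
qed

end
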